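(* Let $\varphi:\mathcal X\to\mathbb R^m$ be a feature map and let $p,q$ be probability distributions on $\mathcal X$ that have full support and are mutually absolutely continuous (so that $dp/dq$ is finite and strictly positive). Then $$F(p\|q,\varphi)\le D(p\|q),$$ with equality if and only if, for $\nu$-almost every $\rho$ in the support of $\nu$, there exists $\theta(\rho)\in\mathbb R^m$ such that for almost all $x\in\mathcal X$, $$\frac{\frac{dp}{dq}(x)-1}{\rho\frac{dp}{dq}(x)+1-\rho}=\theta(\rho)^\top\varphi(x).$$
   Context: Let $\nu$ be a probability measure on $[0,1]$ and define the convex function $f(t)=\int_0^1\frac12\frac{(t-1)^2}{\rho t+1-\rho}\,d\nu(\rho)$ for $t>0$ (these are exactly the operator-convex functions with $f(1)=f'(1)=0$, $f''(1)=1$; e.g. $d\nu(\rho)=2(1-\rho)d\rho$ gives $f(t)=t\log t-t+1$). The $f$-divergence is $D(p\|q)=\int_{\mathcal X} f\big(\frac{dp}{dq}(x)\big)\,dq(x)$. Standing assumption: $dp/dq$ exists and takes values in $[\alpha,1/\alpha]$ for some $\alpha\in(0,1]$. Moments: $\mu_p=\int\varphi\,dp$, $\mu_q=\int\varphi\,dq$, $\Sigma_p=\int\varphi\varphi^\top dp$, $\Sigma_q=\int\varphi\varphi^\top dq$ (assumed finite). The moment-based divergence is $$F(p\|q,\varphi)=\frac12\int_0^1(\mu_p-\mu_q)^\top(\rho\Sigma_p+(1-\rho)\Sigma_q)^{-1}(\mu_p-\mu_q)\,d\nu(\rho),$$ where, when the matrices are not invertible, this is understood as $\inf_{t:(0,1)\to\mathbb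 R}\frac12\int_0^1 t(\rho)\,d\nu(\rho)$ subject to $\begin{pmatrix}\rho\Sigma_p+(1-\rho)\Sigma_q & \mu_p-\mu_q\\ (\mu_p-\mu_q)^\top & t(\rho)\end{pmatrix}\succeq 0$ for all $\rho$ (at $\rho=0,1$ the matrix $\rho\Sigma_p+(1-\rho)\Sigma_q$ is $\Sigma_q$, resp. $\Sigma_p$). *)

theory Defs
  imports "HOL-Probability.Probability"
begin

definition dens :: "'a measure \<Rightarrow> 'a measure \<Rightarrow> 'a \<Rightarrow> real" where
  "dens p q x = enn2real (RN_deriv q p x)"

definition fgen :: "real measure \<Rightarrow> real \<Rightarrow> real" where
  "fgen \<nu> t = (\<integral>\<rho>. (1/2) * (t - 1)^2 / (\<rho> * t + 1 - \<rho>) \<partial>\<nu>)"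

definition fdiv :: "real measure \<Rightarrow> 'a measure \<Rightarrow> 'a measure \<Rightarrow> real" where
  "fdiv \<nu> p q = (\<integral>x. fgen \<nu> (dens p q x) \<partial>q)"

definition outer :: "real^'m \<Rightarrow> real^'m^'m" where
  "outer v = (\<chi> i j. v $ i * v $ j)"

definition mean :: "'a measure \<Rightarrow> ('a \<Rightarrow> real^'m) \<Rightarrow> real^'m" where
  "mean p \<phi> = (\<integral>x. \<phi> x \<partial>p)"

definition second_moment :: "'a measure \<Rightarrow> ('a \<Rightarrow> real^'m) \<Rightarrow> real^'m^'m" where
  "second_moment p \<phi> = (\<integral>x. outer (\<phi> x) \<partial>p)"

definition psd :: "real^'n^'n \<Rightarrow> bool" where
  "psd A \<longleftrightarrow> transpose A = A \<and> (\<forall>x. 0 \<le> x \<bullet> (A *v x))"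

definition block :: "real^'m^'m \<Rightarrow> real^'m \<Rightarrow> real \<Rightarrow> real^('m option)^('m option)" where
  "block M d t = (\<chi> i j. case (i, j) of
      (Some a, Some b) \<Rightarrow> M $ a $ b
    | (Some a, None) \<Rightarrow> d $ a
    | (None, Some b) \<Rightarrow> d $ b
    | (None, None) \<Rightarrow> t)"

definition moment_div :: "real measure \<Rightarrow> 'a measure \<Rightarrow> 'a measure \<Rightarrow> ('a \<Rightarrow> real^'m) \<Rightarrow> real" where
  "moment_div \<nu> p q \<phi> = Inf {(1/2) * (\<integral>\<rho>. t \<rho> \<partial>\<nu>) | t. integrable \<nu> t \<and>
      (\<forall>\<rho>\<in>{0..1}. psd (block (\<rho> *\<^sub>R second_moment p \<phi> + (1 - \<rho>) *\<^sub>R second_moment q \<phi>)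
                             (mean p \<phi> - mean q \<phi>) (t \<rho>)))}"

end

theory Submission
  imports Defs
begin

(* Write r = dp/dq and w = rho r + 1 - rho. By Fubini, D(p||q) is half the nu-average of
   chi(rho) = int (r - 1)^2 / w dq. Since the moments are the q-integrals of r phi, phi,
   r phi phi^T and phi phi^T, completing the square gives, for every theta,
     chi(rho) - (2 theta^T (mu_p - mu_q) - theta^T (rho Sigma_p + (1 - rho) Sigma_q) theta)
       = int (r - 1 - w theta^T phi)^2 / w dq  >=  0.
   The block matrix is positive semidefinite iff t(rho) dominates the supremum over theta of
   the bracket; this supremum is attained, as mu_p - mu_q is orthogonal to the kernel of the
   mixed second moment, so F is half the nu-average of the supremum. Hence F <= D, with
   equality iff for nu-almost every rho some theta makes the square vanish q-almost everywhere. *)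

lemma inner_outer_mult: "\<theta> \<bullet> (outer v *v \<theta>) = (\<theta> \<bullet> v)\<^sup>2"
proof -
  have "\<theta> \<bullet> (outer v *v \<theta>) = (\<Sum>i\<in>UNIV. \<theta>$i * (\<Sum>j\<in>UNIV. v$i * v$j * \<theta>$j))"
    by (simp add: inner_vec_def outer_def matrix_vector_mult_def)
  also have "\<dots> = (\<Sum>i\<in>UNIV. \<theta>$i * v$i) * (\<Sum>j\<in>UNIV. v$j * \<theta>$j)"
    by (simp add: sum_distrib_left sum_distrib_right mult_ac)
  finally show ?thesis
    by (simp add: inner_vec_def power2_eq_square mult_ac)
qed

lemma transpose_outer: "transpose (outer v) = outer v"
  by (simp add: transpose_def outer_def vec_eq_iff mult_ac)

lemma bounded_linear_quadratic_form: "bounded_linear (\<lambda>A::real^'n^'n. \<theta> \<bullet> (A *v \<theta>))"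
  by (auto intro!: linear_conv_bounded_linear[THEN iffD1] linearI
      simp: matrix_vector_mult_def inner_vec_def sum.distrib algebra_simps sum_distrib_left)

lemma bounded_linear_transpose: "bounded_linear (transpose :: real^'n^'m \<Rightarrow> real^'m^'n)"
  by (auto intro!: linear_conv_bounded_linear[THEN iffD1] linearI simp: transpose_def vec_eq_iff)

lemma integrable_inner_square:
  assumes "integrable M (\<lambda>x. outer (\<phi> x))"
  shows "integrable M (\<lambda>x. (\<theta> \<bullet> \<phi> x)\<^sup>2)"
  using integrable_bounded_linear[OF bounded_linear_quadratic_form assms]
  by (simp add: inner_outer_mult)

lemma second_moment_quadratic_form:
  assumes "integrable M (\<lambda>x. outer (\<phi> x))"
  shows "\<theta> \<bullet> (second_moment M \<phi> *v \<theta>) = (\<integral>x. (\<theta> \<bullet> \<phi> x)\<^sup>2 \<partial>M)"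
  using integral_bounded_linear[OF bounded_linear_quadratic_form assms]
  by (simp add: second_moment_def inner_outer_mult)

lemma transpose_second_moment:
  assumes "integrable M (\<lambda>x. outer (\<phi> x))"
  shows "transpose (second_moment M \<phi>) = second_moment M \<phi>"
  using integral_bounded_linear[OF bounded_linear_transpose assms]
  by (simp add: second_moment_def transpose_outer)

lemma mean_inner:
  assumes "integrable M \<phi>"
  shows "mean M \<phi> \<bullet> \<theta> = (\<integral>x. \<theta> \<bullet> \<phi> x \<partial>M)"
  using assms by (simp add: mean_def inner_commute)

definition dual_objective :: "real^'n^'n \<Rightarrow> real^'n \<Rightarrow> real^'n \<Rightarrow> real" where
  "dual_objective M d \<theta> = 2 * (d \<bullet> \<theta>) - \<theta> \<bullet> (M *v \<theta>)"

lemma continuous_dual_objective: "continuous_on UNIV (dual_objective M d)"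
  unfolding dual_objective_def[abs_def]
  by (intro continuous_intros linear_continuous_on matrix_vector_mul_bounded_linear)

lemma block_quadratic_form:
  fixes v :: "real^('n::finite option)"
  shows "v \<bullet> (block M d t *v v) = (\<chi> a. v $ Some a) \<bullet> (M *v (\<chi> a. v $ Some a))
     + 2 * (v $ None) * (d \<bullet> (\<chi> a. v $ Some a)) + (v $ None)\<^sup>2 * t"
proof -
  have sum_option: "(\<Sum>i\<in>UNIV. f i) = f None + (\<Sum>a\<in>UNIV. f (Some a))"
    for f :: "'n option \<Rightarrow> real"
    by (subst UNIV_option_conv, subst sum.insert) (auto simp: sum.reindex)
  show ?thesis
    by (simp add: inner_vec_def matrix_vector_mult_def block_def sum_option sum.distrib
        sum_distrib_left sum_distrib_right algebra_simps power2_eq_square)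
qed

lemma transpose_block: "transpose M = M \<Longrightarrow> transpose (block M d t) = block M d t"
  by (auto simp: transpose_def block_def vec_eq_iff split: option.splits)

lemma psd_block_iff:
  fixes M :: "real^'n::finite^'n"
  assumes "psd M"
  shows "psd (block M d t) \<longleftrightarrow> (\<forall>\<theta>. dual_objective M d \<theta> \<le> t)"
proof
  assume block_psd: "psd (block M d t)"
  show "\<forall>\<theta>. dual_objective M d \<theta> \<le> t"
  proof
    fix \<theta>
    define v :: "real^('n option)" where "v = (\<chi> i. case i of None \<Rightarrow> 1 | Some a \<Rightarrow> - \<theta> $ a)"
    have "(\<chi> a. v $ Some a) = - \<theta>" "v $ None = 1"
      by (simp_all add: v_def vec_eq_iff)
    moreover have "0 \<le> v \<bullet> (block M d t *v v)"
      using block_psd by (simp add: psd_def)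
    ultimately show "dual_objective M d \<theta> \<le> t"
      using matrix_vector_mult_scaleR[of M "-1" \<theta>]
      by (simp add: block_quadratic_form dual_objective_def)
  qed
next
  assume bound: "\<forall>\<theta>. dual_objective M d \<theta> \<le> t"
  show "psd (block M d t)"
    unfolding psd_def
  proof (intro conjI allI)
    show "transpose (block M d t) = block M d t"
      using assms by (simp add: psd_def transpose_block)
    fix v :: "real^('n option)"
    define \<theta> where "\<theta> = (\<chi> a. v $ Some a)"
    define s where "s = v $ None"
    have "0 \<le> \<theta> \<bullet> (M *v \<theta>) + 2 * s * (d \<bullet> \<theta>) + s\<^sup>2 * t"
    proof (cases "s = 0")
      case True
      then show ?thesis using assms by (simp add: psd_def)
    next
      case False
      define u where "u = (- 1 / s) *\<^sub>R \<theta>"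
      have "\<theta> = (- s) *\<^sub>R u" using False by (simp add: u_def)
      then have "\<theta> \<bullet> (M *v \<theta>) + 2 * s * (d \<bullet> \<theta>) + s\<^sup>2 * t = s\<^sup>2 * (t - dual_objective M d u)"
        by (simp add: dual_objective_def matrix_vector_mult_scaleR linear_neg[OF matrix_vector_mul_linear]
            algebra_simps power2_eq_square)
      then show ?thesis using bound by simp
    qed
    then show "0 \<le> v \<bullet> (block M d t *v v)"
      by (simp add: block_quadratic_form \<theta>_def s_def)
  qed
qed

lemma symmetric_inner_mult:
  fixes A :: "real^'n^'n"
  assumes "transpose A = A"
  shows "x \<bullet> (A *v y) = y \<bullet> (A *v x)"
  by (metis assms dot_lmul_matrix inner_commute vector_transpose_matrix)

lemma dual_objective_le_at_solution:
  assumes "psd M" and "M *v \<theta>\<^sub>0 = d"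
  shows "dual_objective M d \<theta> \<le> dual_objective M d \<theta>\<^sub>0"
proof -
  have "\<theta>\<^sub>0 \<bullet> (M *v \<theta>) = \<theta> \<bullet> d"
    using assms symmetric_inner_mult[of M] by (metis psd_def)
  then have "dual_objective M d \<theta>\<^sub>0 - dual_objective M d \<theta> = (\<theta> - \<theta>\<^sub>0) \<bullet> (M *v (\<theta> - \<theta>\<^sub>0))"
    using assms(2) by (simp add: dual_objective_def matrix_vector_mult_diff_distrib
        inner_diff_left inner_diff_right inner_commute)
  moreover have "0 \<le> (\<theta> - \<theta>\<^sub>0) \<bullet> (M *v (\<theta> - \<theta>\<^sub>0))"
    using assms(1) by (simp add: psd_def)
  ultimately show ?thesis by simp
qed

lemma solvable_if_kernel_orthogonal:
  fixes M :: "real^'n^'n"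
  assumes "\<And>z. z \<bullet> (M *v z) = 0 \<Longrightarrow> d \<bullet> z = 0"
  shows "\<exists>\<theta>. M *v \<theta> = d"
proof -
  let ?S = "range (\<lambda>\<theta>. M *v \<theta>)"
  have span: "span ?S = ?S"
    using span_linear_image[OF matrix_vector_mul_linear, of M UNIV] by simp
  obtain y z where y: "y \<in> span ?S" and z: "\<And>v. v \<in> span ?S \<Longrightarrow> orthogonal z v"
    and d: "d = y + z"
    using orthogonal_subspace_decomp_exists[of ?S d] by blast
  have "z \<bullet> (M *v z) = 0"
    using z span by (auto simp: orthogonal_def)
  then have "d \<bullet> z = 0" by (rule assms)
  moreover have "y \<bullet> z = 0"
    using z[OF y] by (simp add: orthogonal_def inner_commute)
  ultimately have "z = 0"
    using d by (simp add: inner_add_left)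
  then show ?thesis
    using d y span by auto
qed

lemma SUP_dense_eq_max:
  fixes f :: "'b::topological_space \<Rightarrow> real"
  assumes cont: "continuous_on UNIV f"
    and dense: "\<And>U. open U \<Longrightarrow> U \<noteq> {} \<Longrightarrow> \<exists>d\<in>D. d \<in> U"
    and max: "\<And>\<theta>. f \<theta> \<le> f \<theta>\<^sub>0"
  shows "(SUP \<theta>\<in>D. f \<theta>) = f \<theta>\<^sub>0"
proof (rule antisym)
  have "D \<noteq> {}" using dense[of UNIV] by auto
  then show "(SUP \<theta>\<in>D. f \<theta>) \<le> f \<theta>\<^sub>0"
    using max by (intro cSUP_least) auto
  show "f \<theta>\<^sub>0 \<le> (SUP \<theta>\<in>D. f \<theta>)"
  proof (rule field_le_epsilon)
    fix e :: real assume "0 < e"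
    have "open {\<theta>. f \<theta>\<^sub>0 - e < f \<theta>}"
      by (rule open_Collect_less[OF continuous_on_const cont])
    moreover have "\<theta>\<^sub>0 \<in> {\<theta>. f \<theta>\<^sub>0 - e < f \<theta>}" using \<open>0 < e\<close> by simp
    ultimately obtain \<theta> where "\<theta> \<in> D" "f \<theta>\<^sub>0 - e < f \<theta>"
      using dense by blast
    moreover have "bdd_above (f ` D)"
      by (meson bdd_aboveI2 max)
    ultimately show "f \<theta>\<^sub>0 \<le> (SUP \<theta>\<in>D. f \<theta>) + e"
      using cSUP_upper[of \<theta> D f] by linarith
  qed
qed

lemma borel_measurable_SUP_attained:
  fixes f :: "'a \<Rightarrow> 'b::second_countable_topology \<Rightarrow> real"
  assumes meas: "\<And>\<theta>. (\<lambda>x. f x \<theta>) \<in> borel_measurable M"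
    and cont: "\<And>x. continuous_on UNIV (f x)"
    and max: "\<And>x. \<exists>\<theta>\<^sub>0. \<forall>\<theta>. f x \<theta> \<le> f x \<theta>\<^sub>0"
  shows "(\<lambda>x. SUP \<theta>. f x \<theta>) \<in> borel_measurable M"
proof -
  obtain D :: "'b set" where "countable D" and dense: "\<And>U. open U \<Longrightarrow> U \<noteq> {} \<Longrightarrow> \<exists>d\<in>D. d \<in> U"
    using countable_dense_exists by blast
  have "(SUP \<theta>. f x \<theta>) = (SUP \<theta>\<in>D. f x \<theta>)" for x
  proof -
    obtain \<theta>\<^sub>0 where max_x: "\<And>\<theta>. f x \<theta> \<le> f x \<theta>\<^sub>0" using max by blast
    then have "(SUP \<theta>. f x \<theta>) = f x \<theta>\<^sub>0"
      by (intro cSup_eq_maximum) auto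
    then show ?thesis
      using SUP_dense_eq_max[OF cont dense max_x] by simp
  qed
  moreover have "(\<lambda>x. SUP \<theta>\<in>D. f x \<theta>) \<in> borel_measurable M"
    using \<open>countable D\<close> meas
  proof (rule borel_measurable_cSUP)
    show "bdd_above ((\<lambda>\<theta>. f x \<theta>) ` D)" for x
      by (metis bdd_aboveI2 max)
  qed
  ultimately show ?thesis by simp
qed

lemma integral_eq_iff_AE_eq:
  fixes f g :: "'a \<Rightarrow> real"
  assumes "integrable M f" "integrable M g" "AE x in M. f x \<le> g x"
  shows "integral\<^sup>L M f = integral\<^sup>L M g \<longleftrightarrow> (AE x in M. f x = g x)"
proof -
  have "integral\<^sup>L M f = integral\<^sup>L M g \<longleftrightarrow> (\<integral>x. g x - f x \<partial>M) = 0"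
    using assms by (simp add: Bochner_Integration.integral_diff) (rule eq_commute)
  also have "\<dots> \<longleftrightarrow> (AE x in M. g x - f x = 0)"
    using assms by (intro integral_nonneg_eq_0_iff_AE) auto
  also have "\<dots> \<longleftrightarrow> (AE x in M. f x = g x)"
    by (rule eventually_subst) (auto intro: AE_I2)
  finally show ?thesis .
qed

lemma Inf_integrals_of_majorants:
  fixes V :: "'a \<Rightarrow> real"
  assumes "integrable M V" "AE x in M. x \<in> A" "0 \<le> c"
  shows "Inf {c * integral\<^sup>L M t | t. integrable M t \<and> (\<forall>x\<in>A. V x \<le> t x)} = c * integral\<^sup>L M V"
proof (rule cInf_eq_minimum)
  show "c * integral\<^sup>L M V \<in> {c * integral\<^sup>L M t | t. integrable M t \<and> (\<forall>x\<in>A. V x \<le> t x)}"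
    using assms(1) by blast
  fix s assume "s \<in> {c * integral\<^sup>L M t | t. integrable M t \<and> (\<forall>x\<in>A. V x \<le> t x)}"
  then obtain t where s: "s = c * integral\<^sup>L M t" and "integrable M t" "\<forall>x\<in>A. V x \<le> t x"
    by blast
  then have "integral\<^sup>L M V \<le> integral\<^sup>L M t"
    using assms(1,2) by (intro integral_mono_AE) (auto elim: AE_mp)
  then show "c * integral\<^sup>L M V \<le> s"
    using s assms(3) by (simp add: mult_left_mono)
qed

locale bounded_likelihood_ratio = p: prob_space p + q: prob_space q
  for p q :: "'a measure" and \<alpha> :: real +
  assumes sets_eq: "sets p = sets q"
    and abs_cont: "absolutely_continuous q p"
    and alpha: "0 < \<alpha>" "\<alpha> \<le> 1"
    and dens_bounds: "AE x in q. \<alpha> \<le> dens p q x \<and> dens p q x \<le> 1 / \<alpha>"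
begin

definition ratio :: "'a \<Rightarrow> real" where
  "ratio x = max \<alpha> (min (1 / \<alpha>) (dens p q x))"

definition weight :: "real \<Rightarrow> 'a \<Rightarrow> real" where
  "weight \<rho> x = \<rho> * ratio x + 1 - \<rho>"

text \<open>This interpolates between \<open>\<chi>\<^sup>2(p\<parallel>q)\<close> at \<open>\<rho> = 0\<close> and \<open>\<chi>\<^sup>2(q\<parallel>p)\<close> at \<open>\<rho> = 1\<close>.\<close>
definition chi2_interp :: "real \<Rightarrow> real" where
  "chi2_interp \<rho> = (\<integral>x. (ratio x - 1)\<^sup>2 / weight \<rho> x \<partial>q)"

lemma ratio_measurable[measurable]: "ratio \<in> borel_measurable q"
  unfolding ratio_def dens_def by measurable

lemma ratio_bounds: "\<alpha> \<le> ratio x" "ratio x \<le> 1 / \<alpha>"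
proof -
  have "\<alpha> \<le> 1 / \<alpha>"
    using alpha by (simp add: field_simps mult_le_one)
  then show "\<alpha> \<le> ratio x" "ratio x \<le> 1 / \<alpha>"
    by (auto simp: ratio_def)
qed

lemma AE_ratio_eq_dens: "AE x in q. ratio x = dens p q x"
  using dens_bounds by eventually_elim (auto simp: ratio_def)

lemma p_eq_density: "p = density q (\<lambda>x. ennreal (ratio x))"
proof -
  have "AE x in q. RN_deriv q p x = ennreal (ratio x)"
    using q.RN_deriv_finite[OF p.sigma_finite_measure_axioms abs_cont sets_eq] AE_ratio_eq_dens
    by eventually_elim (auto simp: dens_def less_top)
  then have "density q (RN_deriv q p) = density q (\<lambda>x. ennreal (ratio x))"
    by (intro density_cong) auto
  then show ?thesis
    using q.density_RN_deriv[OF abs_cont sets_eq] by simp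
qed

lemma integral_p:
  fixes f :: "'a \<Rightarrow> real"
  assumes "f \<in> borel_measurable q"
  shows "integral\<^sup>L p f = (\<integral>x. ratio x * f x \<partial>q)"
  using integral_density[of f q ratio] assms ratio_bounds alpha
  by (subst p_eq_density) (auto intro: order.trans[OF less_imp_le])

lemma integrable_p_iff:
  fixes f :: "'a \<Rightarrow> real"
  assumes "f \<in> borel_measurable q"
  shows "integrable p f \<longleftrightarrow> integrable q (\<lambda>x. ratio x * f x)"
  using integrable_density[of f q ratio] assms ratio_bounds alpha
  by (subst p_eq_density) (auto intro: order.trans[OF less_imp_le])

lemma alpha_le_weight:
  assumes "\<rho> \<in> {0..1}"
  shows "\<alpha> \<le> weight \<rho> x"
proof -
  have "\<rho> * \<alpha> \<le> \<rho> * ratio x" "(1 - \<rho>) * \<alpha> \<le> (1 - \<rho>) * 1"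
    using assms alpha ratio_bounds(1) by (intro mult_left_mono; simp)+
  then show ?thesis
    by (simp add: weight_def algebra_simps)
qed

lemma weight_pos: "\<rho> \<in> {0..1} \<Longrightarrow> 0 < weight \<rho> x"
  using alpha_le_weight[of \<rho> x] alpha by linarith

lemma chi2_integrand_bounds:
  assumes "\<rho> \<in> {0..1}"
  shows "0 \<le> (ratio x - 1)\<^sup>2 / weight \<rho> x" "(ratio x - 1)\<^sup>2 / weight \<rho> x \<le> 1 / \<alpha> ^ 3"
proof -
  have "1 \<le> 1 / \<alpha>" using alpha by simp
  then have "\<bar>ratio x - 1\<bar> \<le> 1 / \<alpha>"
    using ratio_bounds[of x] alpha unfolding abs_le_iff by linarith
  then have "(ratio x - 1)\<^sup>2 \<le> (1 / \<alpha>)\<^sup>2"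
    using power_mono[of "\<bar>ratio x - 1\<bar>" "1 / \<alpha>" 2] by simp
  then have "(ratio x - 1)\<^sup>2 / weight \<rho> x \<le> (1 / \<alpha>)\<^sup>2 / \<alpha>"
    using alpha_le_weight[OF assms, of x] alpha by (intro frac_le) auto
  then show "(ratio x - 1)\<^sup>2 / weight \<rho> x \<le> 1 / \<alpha> ^ 3"
    by (simp add: power2_eq_square power3_eq_cube)
  show "0 \<le> (ratio x - 1)\<^sup>2 / weight \<rho> x"
    using weight_pos[OF assms, of x] by simp
qed

lemma integrable_chi2_integrand:
  assumes "\<rho> \<in> {0..1}"
  shows "integrable q (\<lambda>x. (ratio x - 1)\<^sup>2 / weight \<rho> x)"
proof (rule q.integrable_const_bound[where B = "1 / \<alpha> ^ 3"])
  show "AE x in q. norm ((ratio x - 1)\<^sup>2 / weight \<rho> x) \<le> 1 / \<alpha> ^ 3"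
    using chi2_integrand_bounds[OF assms] by (intro AE_I2) (simp only: real_norm_def abs_of_nonneg)
qed (simp add: weight_def)

lemma chi2_interp_bounds:
  assumes "\<rho> \<in> {0..1}"
  shows "0 \<le> chi2_interp \<rho>" "chi2_interp \<rho> \<le> 1 / \<alpha> ^ 3"
proof -
  show "0 \<le> chi2_interp \<rho>"
    unfolding chi2_interp_def by (intro integral_nonneg_AE AE_I2 chi2_integrand_bounds[OF assms])
  have "chi2_interp \<rho> \<le> (\<integral>x. 1 / \<alpha> ^ 3 \<partial>q)"
    unfolding chi2_interp_def
    by (intro integral_mono integrable_chi2_integrand assms chi2_integrand_bounds) simp
  then show "chi2_interp \<rho> \<le> 1 / \<alpha> ^ 3"
    by (simp add: q.prob_space)
qed

end

locale moment_features = bounded_likelihood_ratio p q \<alpha>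
  for p q :: "'a measure" and \<alpha> :: real +
  fixes \<phi> :: "'a \<Rightarrow> real^'m::finite"
  assumes phi_measurable[measurable]: "\<phi> \<in> borel_measurable q"
    and integrable_p: "integrable p \<phi>" and integrable_q: "integrable q \<phi>"
    and integrable_outer_p: "integrable p (\<lambda>x. outer (\<phi> x))"
    and integrable_outer_q: "integrable q (\<lambda>x. outer (\<phi> x))"
begin

definition mix_moment :: "real \<Rightarrow> real^'m^'m" where
  "mix_moment \<rho> = \<rho> *\<^sub>R second_moment p \<phi> + (1 - \<rho>) *\<^sub>R second_moment q \<phi>"

definition mean_diff :: "real^'m" where
  "mean_diff = mean p \<phi> - mean q \<phi>"

text \<open>For invertible \<open>mix_moment \<rho>\<close> the supremum is the integrand
  \<open>(\<mu>\<^sub>p - \<mu>\<^sub>q)\<^sup>T (\<rho>\<Sigma>\<^sub>p + (1-\<rho>)\<Sigma>\<^sub>q)\<^sup>-\<^sup>1 (\<mu>\<^sub>p - \<mu>\<^sub>q)\<close> of \<open>F\<close>;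
  the junk value 0 off \<open>[0,1]\<close>, where \<open>mix_moment \<rho>\<close> may be indefinite, keeps it measurable.\<close>
definition opt_value :: "real \<Rightarrow> real" where
  "opt_value \<rho> = (if \<rho> \<in> {0..1} then SUP \<theta>. dual_objective (mix_moment \<rho>) mean_diff \<theta> else 0)"

lemma integrable_inner_phi: "integrable q (\<lambda>x. \<theta> \<bullet> \<phi> x)"
  using integrable_q by (simp add: inner_commute)

lemma integrable_ratio_inner_phi: "integrable q (\<lambda>x. ratio x * (\<theta> \<bullet> \<phi> x))"
  using integrable_p integrable_p_iff[of "\<lambda>x. \<theta> \<bullet> \<phi> x"] by (simp add: inner_commute)

lemma integrable_ratio_inner_phi_square: "integrable q (\<lambda>x. ratio x * (\<theta> \<bullet> \<phi> x)\<^sup>2)"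
  using integrable_inner_square[OF integrable_outer_p] integrable_p_iff[of "\<lambda>x. (\<theta> \<bullet> \<phi> x)\<^sup>2"]
  by simp

lemma integrable_weight_inner_phi_square: "integrable q (\<lambda>x. weight \<rho> x * (\<theta> \<bullet> \<phi> x)\<^sup>2)"
proof -
  have "integrable q (\<lambda>x. \<rho> * (ratio x * (\<theta> \<bullet> \<phi> x)\<^sup>2) + (1 - \<rho>) * (\<theta> \<bullet> \<phi> x)\<^sup>2)"
    using integrable_ratio_inner_phi_square integrable_inner_square[OF integrable_outer_q] by simp
  then show ?thesis
    by (simp add: weight_def algebra_simps)
qed

lemma mix_moment_quadratic_form_affine:
  "\<theta> \<bullet> (mix_moment \<rho> *v \<theta>)
     = \<rho> * (\<theta> \<bullet> (second_moment p \<phi> *v \<theta>)) + (1 - \<rho>) * (\<theta> \<bullet> (second_moment q \<phi> *v \<theta>))"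
  by (simp add: mix_moment_def algebra_simps inner_add_right scaleR_matrix_vector_assoc[symmetric])

lemma mix_moment_quadratic_form:
  "\<theta> \<bullet> (mix_moment \<rho> *v \<theta>) = (\<integral>x. weight \<rho> x * (\<theta> \<bullet> \<phi> x)\<^sup>2 \<partial>q)"
proof -
  have "\<theta> \<bullet> (second_moment p \<phi> *v \<theta>) = (\<integral>x. ratio x * (\<theta> \<bullet> \<phi> x)\<^sup>2 \<partial>q)"
    by (simp add: second_moment_quadratic_form[OF integrable_outer_p] integral_p)
  then have "\<theta> \<bullet> (mix_moment \<rho> *v \<theta>)
      = \<rho> * (\<integral>x. ratio x * (\<theta> \<bullet> \<phi> x)\<^sup>2 \<partial>q) + (1 - \<rho>) * (\<integral>x. (\<theta> \<bullet> \<phi> x)\<^sup>2 \<partial>q)"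
    by (simp add: mix_moment_quadratic_form_affine second_moment_quadratic_form[OF integrable_outer_q])
  also have "\<dots> = (\<integral>x. \<rho> * (ratio x * (\<theta> \<bullet> \<phi> x)\<^sup>2) + (1 - \<rho>) * (\<theta> \<bullet> \<phi> x)\<^sup>2 \<partial>q)"
    using integrable_ratio_inner_phi_square integrable_inner_square[OF integrable_outer_q] by simp
  also have "\<dots> = (\<integral>x. weight \<rho> x * (\<theta> \<bullet> \<phi> x)\<^sup>2 \<partial>q)"
    by (simp add: weight_def algebra_simps)
  finally show ?thesis .
qed

lemma mean_diff_inner: "mean_diff \<bullet> \<theta> = (\<integral>x. (ratio x - 1) * (\<theta> \<bullet> \<phi> x) \<partial>q)"
proof -
  have "mean p \<phi> \<bullet> \<theta> = (\<integral>x. ratio x * (\<theta> \<bullet> \<phi> x) \<partial>q)"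
    unfolding mean_inner[OF integrable_p] by (rule integral_p) measurable
  then have "mean_diff \<bullet> \<theta> = (\<integral>x. ratio x * (\<theta> \<bullet> \<phi> x) \<partial>q) - (\<integral>x. \<theta> \<bullet> \<phi> x \<partial>q)"
    by (simp add: mean_diff_def inner_diff_left mean_inner[OF integrable_q])
  also have "\<dots> = (\<integral>x. (ratio x - 1) * (\<theta> \<bullet> \<phi> x) \<partial>q)"
    using integrable_ratio_inner_phi integrable_inner_phi by (simp add: left_diff_distrib)
  finally show ?thesis .
qed

lemma psd_mix_moment:
  assumes "\<rho> \<in> {0..1}"
  shows "psd (mix_moment \<rho>)"
  unfolding psd_def
proof
  show "transpose (mix_moment \<rho>) = mix_moment \<rho>"
    by (simp add: mix_moment_def transpose_scalar transpose_second_moment integrable_outer_p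
        integrable_outer_q linear_add[OF bounded_linear.linear[OF bounded_linear_transpose]])
  show "\<forall>\<theta>. 0 \<le> \<theta> \<bullet> (mix_moment \<rho> *v \<theta>)"
    using weight_pos[OF assms, THEN less_imp_le]
    by (auto simp: mix_moment_quadratic_form intro!: integral_nonneg_AE AE_I2)
qed

lemma chi2_interp_minus_dual_objective:
  fixes \<theta> :: "real^'m"
  assumes rho: "\<rho> \<in> {0..1}"
  defines "gap \<equiv> \<lambda>x. (ratio x - 1 - weight \<rho> x * (\<theta> \<bullet> \<phi> x))\<^sup>2 / weight \<rho> x"
  shows "integrable q gap"
    and "chi2_interp \<rho> - dual_objective (mix_moment \<rho>) mean_diff \<theta> = integral\<^sup>L q gap"
proof -
  have expand: "gap x = (ratio x - 1)\<^sup>2 / weight \<rho> x - 2 * ((ratio x - 1) * (\<theta> \<bullet> \<phi> x))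
      + weight \<rho> x * (\<theta> \<bullet> \<phi> x)\<^sup>2" for x
    using weight_pos[OF rho, of x] by (simp add: gap_def field_simps power2_eq_square)
  have integrable_cross: "integrable q (\<lambda>x. (ratio x - 1) * (\<theta> \<bullet> \<phi> x))"
    using integrable_ratio_inner_phi integrable_inner_phi by (simp add: left_diff_distrib)
  show "integrable q gap"
    unfolding expand using integrable_chi2_integrand[OF rho] integrable_cross
      integrable_weight_inner_phi_square by simp
  show "chi2_interp \<rho> - dual_objective (mix_moment \<rho>) mean_diff \<theta> = integral\<^sup>L q gap"
    unfolding expand using integrable_chi2_integrand[OF rho] integrable_cross
      integrable_weight_inner_phi_square
    by (simp add: chi2_interp_def dual_objective_def mean_diff_inner mix_moment_quadratic_form)
qed

lemma dual_objective_le_chi2_interp: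
  assumes "\<rho> \<in> {0..1}"
  shows "dual_objective (mix_moment \<rho>) mean_diff \<theta> \<le> chi2_interp \<rho>"
proof -
  have "0 \<le> (\<integral>x. (ratio x - 1 - weight \<rho> x * (\<theta> \<bullet> \<phi> x))\<^sup>2 / weight \<rho> x \<partial>q)"
    using weight_pos[OF assms] by (intro integral_nonneg_AE AE_I2 divide_nonneg_pos) auto
  then show ?thesis
    using chi2_interp_minus_dual_objective(2)[OF assms, of \<theta>] by simp
qed

lemma dual_objective_eq_chi2_interp_iff:
  assumes "\<rho> \<in> {0..1}"
  shows "dual_objective (mix_moment \<rho>) mean_diff \<theta> = chi2_interp \<rho> \<longleftrightarrow>
    (AE x in q. (dens p q x - 1) / (\<rho> * dens p q x + 1 - \<rho>) = \<theta> \<bullet> \<phi> x)"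
proof -
  have "dual_objective (mix_moment \<rho>) mean_diff \<theta> = chi2_interp \<rho> \<longleftrightarrow>
      (\<integral>x. (ratio x - 1 - weight \<rho> x * (\<theta> \<bullet> \<phi> x))\<^sup>2 / weight \<rho> x \<partial>q) = 0"
    using chi2_interp_minus_dual_objective(2)[OF assms, of \<theta>] by auto
  also have "\<dots> \<longleftrightarrow> (AE x in q. (ratio x - 1 - weight \<rho> x * (\<theta> \<bullet> \<phi> x))\<^sup>2 / weight \<rho> x = 0)"
    using weight_pos[OF assms] chi2_interp_minus_dual_objective(1)[OF assms, of \<theta>]
    by (intro integral_nonneg_eq_0_iff_AE AE_I2 divide_nonneg_pos) auto
  also have "\<dots> \<longleftrightarrow> (AE x in q. (dens p q x - 1) / (\<rho> * dens p q x + 1 - \<rho>) = \<theta> \<bullet> \<phi> x)"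
  proof (rule eventually_subst)
    show "AE x in q. ((ratio x - 1 - weight \<rho> x * (\<theta> \<bullet> \<phi> x))\<^sup>2 / weight \<rho> x = 0) =
        ((dens p q x - 1) / (\<rho> * dens p q x + 1 - \<rho>) = \<theta> \<bullet> \<phi> x)"
      using AE_ratio_eq_dens
    proof eventually_elim
      case (elim x)
      have "weight \<rho> x \<noteq> 0" using weight_pos[OF assms, of x] by simp
      then show ?case
        using elim by (auto simp: weight_def field_simps)
    qed
  qed
  finally show ?thesis .
qed

lemma mean_diff_orthogonal_kernel:
  assumes "\<rho> \<in> {0..1}" and "z \<bullet> (mix_moment \<rho> *v z) = 0"
  shows "mean_diff \<bullet> z = 0"
proof -
  have "AE x in q. weight \<rho> x * (z \<bullet> \<phi> x)\<^sup>2 = 0"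
    using assms(2) weight_pos[OF assms(1), THEN less_imp_le] integrable_weight_inner_phi_square
    by (subst integral_nonneg_eq_0_iff_AE[symmetric]) (auto simp: mix_moment_quadratic_form)
  then have "AE x in q. (ratio x - 1) * (z \<bullet> \<phi> x) = 0"
  proof eventually_elim
    case (elim x)
    with weight_pos[OF assms(1), of x] show ?case by simp
  qed
  then show ?thesis
    by (simp add: mean_diff_inner integral_cong_AE[where g = "\<lambda>_. 0"])
qed

lemma opt_value_attained:
  assumes "\<rho> \<in> {0..1}"
  obtains \<theta>\<^sub>0 where "opt_value \<rho> = dual_objective (mix_moment \<rho>) mean_diff \<theta>\<^sub>0"
    and "\<And>\<theta>. dual_objective (mix_moment \<rho>) mean_diff \<theta> \<le> opt_value \<rho>"
proof -
  obtain \<theta>\<^sub>0 where "mix_moment \<rho> *v \<theta>\<^sub>0 = mean_diff"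
    using solvable_if_kernel_orthogonal mean_diff_orthogonal_kernel[OF assms] by blast
  then have max: "dual_objective (mix_moment \<rho>) mean_diff \<theta> \<le> dual_objective (mix_moment \<rho>) mean_diff \<theta>\<^sub>0"
    for \<theta>
    by (rule dual_objective_le_at_solution[OF psd_mix_moment[OF assms]])
  then have "opt_value \<rho> = dual_objective (mix_moment \<rho>) mean_diff \<theta>\<^sub>0"
    unfolding opt_value_def using assms by (auto intro!: cSup_eq_maximum)
  with max show thesis by (metis that)
qed

lemma psd_block_mix_moment_iff:
  assumes "\<rho> \<in> {0..1}"
  shows "psd (block (mix_moment \<rho>) mean_diff t) \<longleftrightarrow> opt_value \<rho> \<le> t"
proof -
  obtain \<theta>\<^sub>0 where "opt_value \<rho> = dual_objective (mix_moment \<rho>) mean_diff \<theta>\<^sub>0"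
    and "\<And>\<theta>. dual_objective (mix_moment \<rho>) mean_diff \<theta> \<le> opt_value \<rho>"
    using opt_value_attained[OF assms] by blast
  then show ?thesis
    using psd_block_iff[OF psd_mix_moment[OF assms]] by (metis order.trans)
qed

lemma opt_value_nonneg: "0 \<le> opt_value \<rho>"
proof (cases "\<rho> \<in> {0..1}")
  case True
  then have "dual_objective (mix_moment \<rho>) mean_diff 0 \<le> opt_value \<rho>"
    by (metis opt_value_attained)
  then show ?thesis by (simp add: dual_objective_def)
qed (simp only: opt_value_def if_False order_refl)

lemma opt_value_le_chi2_interp: "\<rho> \<in> {0..1} \<Longrightarrow> opt_value \<rho> \<le> chi2_interp \<rho>"
  by (metis opt_value_attained dual_objective_le_chi2_interp)

lemma opt_value_eq_chi2_interp_iff: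
  assumes "\<rho> \<in> {0..1}"
  shows "opt_value \<rho> = chi2_interp \<rho> \<longleftrightarrow>
    (\<exists>\<theta>. AE x in q. (dens p q x - 1) / (\<rho> * dens p q x + 1 - \<rho>) = \<theta> \<bullet> \<phi> x)"
proof -
  obtain \<theta>\<^sub>0 where "opt_value \<rho> = dual_objective (mix_moment \<rho>) mean_diff \<theta>\<^sub>0"
    and "\<And>\<theta>. dual_objective (mix_moment \<rho>) mean_diff \<theta> \<le> opt_value \<rho>"
    using opt_value_attained[OF assms] by blast
  then have "opt_value \<rho> = chi2_interp \<rho> \<longleftrightarrow>
      (\<exists>\<theta>. dual_objective (mix_moment \<rho>) mean_diff \<theta> = chi2_interp \<rho>)"
    using opt_value_le_chi2_interp[OF assms] by (metis order.antisym)
  then show ?thesis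
    by (simp add: dual_objective_eq_chi2_interp_iff[OF assms])
qed

lemma opt_value_measurable: "opt_value \<in> borel_measurable borel"
proof -
  define f where "f \<rho> \<theta> = (if \<rho> \<in> {0..1} then dual_objective (mix_moment \<rho>) mean_diff \<theta> else 0)"
    for \<rho> \<theta>
  have "(\<lambda>\<rho>. SUP \<theta>. f \<rho> \<theta>) \<in> borel_measurable borel"
  proof (rule borel_measurable_SUP_attained)
    show "(\<lambda>\<rho>. f \<rho> \<theta>) \<in> borel_measurable borel" for \<theta>
      unfolding f_def dual_objective_def mix_moment_quadratic_form_affine by measurable
    show "continuous_on UNIV (f \<rho>)" for \<rho>
      by (cases "\<rho> \<in> {0..1}")
        (simp_all only: f_def[abs_def] if_True if_False continuous_on_const continuous_dual_objective)
    show "\<exists>\<theta>\<^sub>0. \<forall>\<theta>. f \<rho> \<theta> \<le> f \<rho> \<theta>\<^sub>0" for \<rho>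
    proof (cases "\<rho> \<in> {0..1}")
      case True
      obtain \<theta>\<^sub>0 where "opt_value \<rho> = dual_objective (mix_moment \<rho>) mean_diff \<theta>\<^sub>0"
        and "\<And>\<theta>. dual_objective (mix_moment \<rho>) mean_diff \<theta> \<le> opt_value \<rho>"
        using opt_value_attained[OF True] by blast
      with True show ?thesis
        unfolding f_def by (simp only: if_True) metis
    qed (simp only: f_def if_False order_refl, blast)
  qed
  moreover have "(SUP \<theta>. f \<rho> \<theta>) = opt_value \<rho>" for \<rho>
    by (cases "\<rho> \<in> {0..1}")
      (simp_all only: f_def opt_value_def if_True if_False cSUP_const UNIV_not_empty not_False_eq_True)
  ultimately show ?thesis by simp
qed

end

locale operator_convex_divergence = moment_features p q \<alpha> \<phi> + nu: prob_space \<nu>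
  for p q :: "'a measure" and \<alpha> :: real and \<phi> :: "'a \<Rightarrow> real^'m::finite" and \<nu> :: "real measure" +
  assumes nu_sets: "sets \<nu> = sets borel"
    and nu_supp: "emeasure \<nu> {0..1} = 1"
begin

lemma AE_nu_unit_interval: "AE \<rho> in \<nu>. \<rho> \<in> {0..1}"
  by (rule nu.AE_prob_1) (simp add: measure_def nu_supp)

lemma measurable_nu_eq_borel: "borel_measurable \<nu> = borel_measurable borel"
  by (rule measurable_cong_sets[OF nu_sets refl])

lemma chi2_interp_measurable: "chi2_interp \<in> borel_measurable \<nu>"
  unfolding chi2_interp_def[abs_def] weight_def measurable_nu_eq_borel by measurable

lemma integrable_chi2_interp: "integrable \<nu> chi2_interp"
proof (rule nu.integrable_const_bound[where B = "1 / \<alpha> ^ 3"])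
  show "AE \<rho> in \<nu>. norm (chi2_interp \<rho>) \<le> 1 / \<alpha> ^ 3"
    using AE_nu_unit_interval by eventually_elim (simp add: chi2_interp_bounds)
qed (rule chi2_interp_measurable)

lemma integrable_opt_value: "integrable \<nu> opt_value"
proof (rule Bochner_Integration.integrable_bound[OF integrable_chi2_interp])
  show "opt_value \<in> borel_measurable \<nu>"
    unfolding measurable_nu_eq_borel by (rule opt_value_measurable)
  show "AE \<rho> in \<nu>. norm (opt_value \<rho>) \<le> norm (chi2_interp \<rho>)"
    using AE_nu_unit_interval
    by eventually_elim (use opt_value_nonneg opt_value_le_chi2_interp in force)
qed

lemma fdiv_eq_integral_chi2_interp: "fdiv \<nu> p q = (1/2) * (\<integral>\<rho>. chi2_interp \<rho> \<partial>\<nu>)"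
proof -
  define H where "H \<rho> x = (1/2) * (ratio x - 1)\<^sup>2 / (\<rho> * ratio x + 1 - \<rho>)" for \<rho> x
  have H_eq: "H \<rho> x = (1/2) * ((ratio x - 1)\<^sup>2 / weight \<rho> x)" for \<rho> x
    by (simp add: H_def weight_def)
  interpret nu_q: pair_prob_space \<nu> q ..
  have H_measurable[measurable]: "case_prod H \<in> borel_measurable (\<nu> \<Otimes>\<^sub>M q)"
    using nu_sets unfolding H_def by measurable
  have "fdiv \<nu> p q = (\<integral>x. fgen \<nu> (ratio x) \<partial>q)"
    unfolding fdiv_def
  proof (rule integral_cong_AE)
    show "(\<lambda>x. fgen \<nu> (dens p q x)) \<in> borel_measurable q"
      unfolding fgen_def dens_def using nu_sets by measurable
    show "(\<lambda>x. fgen \<nu> (ratio x)) \<in> borel_measurable q"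
      unfolding fgen_def using nu_sets by measurable
    show "AE x in q. fgen \<nu> (dens p q x) = fgen \<nu> (ratio x)"
      using AE_ratio_eq_dens by eventually_elim simp
  qed
  also have "\<dots> = (\<integral>x. (\<integral>\<rho>. H \<rho> x \<partial>\<nu>) \<partial>q)"
    by (simp add: fgen_def H_def)
  also have "\<dots> = (\<integral>\<rho>. (\<integral>x. H \<rho> x \<partial>q) \<partial>\<nu>)"
  proof (rule nu_q.Fubini_integral)
    show "integrable (\<nu> \<Otimes>\<^sub>M q) (case_prod H)"
    proof (rule nu_q.integrable_const_bound[where B = "1 / \<alpha> ^ 3"])
      have "AE \<rho> in \<nu>. AE x in q. norm (H \<rho> x) \<le> 1 / \<alpha> ^ 3"
        using AE_nu_unit_interval
      proof eventually_elim
        case (elim \<rho>)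
        show ?case
        proof (intro AE_I2)
          fix x
          show "norm (H \<rho> x) \<le> 1 / \<alpha> ^ 3"
            using chi2_integrand_bounds[OF elim, of x] by (simp add: H_eq)
        qed
      qed
      then show "AE z in \<nu> \<Otimes>\<^sub>M q. norm (case_prod H z) \<le> 1 / \<alpha> ^ 3"
        by (intro nu_q.AE_pair_measure) auto
    qed (rule H_measurable)
  qed
  also have "\<dots> = (\<integral>\<rho>. (1/2) * chi2_interp \<rho> \<partial>\<nu>)"
  proof -
    have "(\<integral>x. H \<rho> x \<partial>q) = (1/2) * chi2_interp \<rho>" for \<rho>
      unfolding H_eq chi2_interp_def by (rule integral_mult_right_zero)
    then show ?thesis by (simp only:)
  qed
  finally show ?thesis by simp
qed

lemma moment_div_eq_integral_opt_value: "moment_div \<nu> p q \<phi> = (1/2) * (\<integral>\<rho>. opt_value \<rho> \<partial>\<nu>)"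
proof -
  have admissible_iff: "(\<forall>\<rho>\<in>{0..1}. psd (block (mix_moment \<rho>) mean_diff (t \<rho>)))
      \<longleftrightarrow> (\<forall>\<rho>\<in>{0..1}. opt_value \<rho> \<le> t \<rho>)" for t
    using psd_block_mix_moment_iff by blast
  show ?thesis
    unfolding moment_div_def mix_moment_def[symmetric] mean_diff_def[symmetric] admissible_iff
    by (rule Inf_integrals_of_majorants[OF integrable_opt_value AE_nu_unit_interval]) simp
qed

end

theorem proposition1:
  fixes \<nu> :: "real measure" and p q :: "'a measure" and \<phi> :: "'a \<Rightarrow> real^'m" and \<alpha> :: real
  assumes nu_prob: "prob_space \<nu>" and nu_sets: "sets \<nu> = sets borel"
    and nu_supp: "emeasure \<nu> {0..1} = 1"
    and p_prob: "prob_space p" and q_prob: "prob_space q" and pq_sets: "sets p = sets q"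
    and ac_pq: "absolutely_continuous q p" and ac_qp: "absolutely_continuous p q"
    and alpha: "0 < \<alpha>" "\<alpha> \<le> 1"
    and dens_bounds: "AE x in q. \<alpha> \<le> dens p q x \<and> dens p q x \<le> 1 / \<alpha>"
    and phi_meas: "\<phi> \<in> borel_measurable q"
    and int_p: "integrable p \<phi>" and int_q: "integrable q \<phi>"
    and int2_p: "integrable p (\<lambda>x. outer (\<phi> x))" and int2_q: "integrable q (\<lambda>x. outer (\<phi> x))"
  shows "moment_div \<nu> p q \<phi> \<le> fdiv \<nu> p q
    \<and> (moment_div \<nu> p q \<phi> = fdiv \<nu> p q \<longleftrightarrow>
         (AE \<rho> in \<nu>. \<exists>\<theta>::real^'m. AE x in q.
            (dens p q x - 1) / (\<rho> * dens p q x + 1 - \<rho>) = \<theta> \<bullet> \<phi> x))"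
proof -
  interpret operator_convex_divergence p q \<alpha> \<phi> \<nu>
    by (intro operator_convex_divergence.intro moment_features.intro bounded_likelihood_ratio.intro
        operator_convex_divergence_axioms.intro moment_features_axioms.intro
        bounded_likelihood_ratio_axioms.intro assms)
  have le: "AE \<rho> in \<nu>. opt_value \<rho> \<le> chi2_interp \<rho>"
    using AE_nu_unit_interval by eventually_elim (rule opt_value_le_chi2_interp)
  have "(\<integral>\<rho>. opt_value \<rho> \<partial>\<nu>) \<le> (\<integral>\<rho>. chi2_interp \<rho> \<partial>\<nu>)"
    by (rule integral_mono_AE[OF integrable_opt_value integrable_chi2_interp le])
  moreover have "(\<integral>\<rho>. opt_value \<rho> \<partial>\<nu>) = (\<integral>\<rho>. chi2_interp \<rho> \<partial>\<nu>)
      \<longleftrightarrow> (AE \<rho> in \<nu>. opt_value \<rho> = chi2_interp \<rho>)"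
    by (rule integral_eq_iff_AE_eq[OF integrable_opt_value integrable_chi2_interp le])
  moreover have "(AE \<rho> in \<nu>. opt_value \<rho> = chi2_interp \<rho>) \<longleftrightarrow>
      (AE \<rho> in \<nu>. \<exists>\<theta>::real^'m. AE x in q.
        (dens p q x - 1) / (\<rho> * dens p q x + 1 - \<rho>) = \<theta> \<bullet> \<phi> x)"
    using AE_nu_unit_interval
    by (rule eventually_subst[OF eventually_mono]) (rule opt_value_eq_chi2_interp_iff)
  ultimately show ?thesis
    by (simp add: moment_div_eq_integral_opt_value fdiv_eq_integral_chi2_interp)
qed

end
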